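(* Let $M$ be a partial multiplication matrix and let $\mathcal{C}\subseteq\mathsf{Grid}(M)$ be a permutation class, with $\mathcal{C}^\#$ the set of $M$-gridded permutations whose underlying permutations lie in $\mathcal{C}$. Then the set of $M$-indivisible elements of $\mathcal{C}^\#$ is labelled well quasi-ordered if and only if $\mathcal{C}^\#$ is labelled well quasi-ordered. Furthermore, the same statement holds with "labelled well quasi-ordered" replaced by "well quasi-ordered" (under gridded containment).
   Context: Permutations are identified with their plots; a permutation class is a containment-closed set of permutations. A gridding matrix has entries in $\{0,1,-1\}$; an $m\times n$ one has $m$ columns, $n$ rows, $M_{ij}$ in column $i$ from the left and row $j$ from the bottom. An $M$-gridding of a permutation $\pi$ of length $L$ is a choice of vertical lines $\tfrac12=v_0\le\dots\le v_m=L+\tfrac12$ and horizontal lines $\tfrac12=h_0\le\dots\le h_n=L+\tfrac12$, not through points of $\pi$, such that in each cell $C_{ij}=\{v_{i-1}<x<v_i,\ h_{j-1}<y<h_j\}$ the points of $\pi$ are absent if $M_{ij}=0$, increasing if $M_{ij}=1$, decreasing if $M_{ij}=-1$; the result is an $M$-gridded permutation, and $\mathsf{Grid}(M)$ is the class of permutations with an $M$-gridding. Gridded containment: $\sigma^\#\le\pi^\#$ if some subsequence of $\pi$ order-isomorphic to $\sigma$ maps each point of $\sigma^\#$ to a point lying in the cell with the same index. $M$ is a partial multiplication matrix: there are fixed $c_1,\dots,c_m,r_1,\dots,r_n\in\{\pm1\}$ with $M_{ij}=c_ir_j$ for each non-zero entry. Column $i$ is oriented left-to-right if $c_i=1$,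 right-to-left otherwise; row $j$ bottom-to-top if $r_j=1$, top-to-bottom otherwise. $M$-sum: $\sigma^\#\boxplus\tau^\#$ is the $M$-gridded permutation whose points are those of $\sigma^\#$ and $\tau^\#$, each in its cell, with the relative order among points of $\sigma^\#$ and among points of $\tau^\#$ unchanged, and such that in every column (resp. row) of cells all points of $\sigma^\#$ precede all points of $\tau^\#$ in that column's (resp. row's) orientation. An $M$-gridded permutation is $M$-divisible if it equals $\sigma^\#\boxplus\tau^\#$ with both non-empty, and $M$-indivisible otherwise. A quasi-order is wqo if every infinite sequence $x_1,x_2,\dots$ has $i<j$ with $x_i\le x_j$. For a quasi-order $L$, an $L$-labelled gridded permutation is a gridded permutation with a map from its points to $L$; $(\sigma^\#,\ell_\sigma)\le(\pi^\#,\ell_\pi)$ if some gridded embedding maps each point to one whose label is $\ge$ its own. A set of gridded permutations is labelled well quasi-ordered if its set of $L$-labelled elements is wqo for every wqo $L$. *)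

theory Defs
  imports Main
begin

(* Permutations of length L are lists p that are permutations of [0..<L];
   the point at position x (0-based) has value p!x. *)
definition is_perm :: "nat list \<Rightarrow> bool" where
  "is_perm p \<longleftrightarrow> distinct p \<and> set p = {0..<length p}"

definition order_emb :: "(nat \<Rightarrow> nat) \<Rightarrow> nat list \<Rightarrow> nat list \<Rightarrow> bool" where
  "order_emb f q p \<longleftrightarrow>
     (\<forall>a<length q. f a < length p) \<and>
     (\<forall>a<length q. \<forall>b<length q. a < b \<longrightarrow> f a < f b) \<and>
     (\<forall>a<length q. \<forall>b<length q. q!a < q!b \<longleftrightarrow> p!(f a) < p!(f b))"

definition contained :: "nat list \<Rightarrow> nat list \<Rightarrow> bool" where
  "contained q p \<longleftrightarrow> (\<exists>f. order_emb f q p)"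

definition perm_class :: "nat list set \<Rightarrow> bool" where
  "perm_class C \<longleftrightarrow> (\<forall>p\<in>C. is_perm p) \<and>
     (\<forall>p\<in>C. \<forall>q. is_perm q \<and> contained q p \<longrightarrow> q \<in> C)"

(* m columns, n rows; M i j for column i (0-based, from the left), row j (0-based, from bottom) *)
definition gridding_matrix :: "nat \<Rightarrow> nat \<Rightarrow> (nat \<Rightarrow> nat \<Rightarrow> int) \<Rightarrow> bool" where
  "gridding_matrix m n M \<longleftrightarrow> (\<forall>i<m. \<forall>j<n. M i j \<in> {0, 1, -1})"

definition partial_mult_matrix ::
  "nat \<Rightarrow> nat \<Rightarrow> (nat \<Rightarrow> nat \<Rightarrow> int) \<Rightarrow> (nat \<Rightarrow> int) \<Rightarrow> (nat \<Rightarrow> int) \<Rightarrow> bool" where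
  "partial_mult_matrix m n M c r \<longleftrightarrow> gridding_matrix m n M \<and>
     (\<forall>i<m. c i \<in> {1, -1}) \<and> (\<forall>j<n. r j \<in> {1, -1}) \<and>
     (\<forall>i<m. \<forall>j<n. M i j \<noteq> 0 \<longrightarrow> M i j = c i * r j)"

(* A gridded permutation (p, cs, rs): cs = [c_0,...,c_m] are the column cuts:
   the vertical line v_i lies between positions c_i - 1 and c_i (i.e. v_i = c_i + 1/2
   in 1-based coordinates); similarly rs for the horizontal lines on values. *)
type_synonym gperm = "nat list \<times> nat list \<times> nat list"

definition glen :: "gperm \<Rightarrow> nat" where
  "glen g = length (fst g)"

fun in_col :: "gperm \<Rightarrow> nat \<Rightarrow> nat \<Rightarrow> bool" where
  "in_col (p, cs, rs) i x \<longleftrightarrow> cs!i \<le> x \<and> x < cs!Suc i"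

fun in_row :: "gperm \<Rightarrow> nat \<Rightarrow> nat \<Rightarrow> bool" where
  "in_row (p, cs, rs) j x \<longleftrightarrow> rs!j \<le> p!x \<and> p!x < rs!Suc j"

definition in_cell :: "gperm \<Rightarrow> nat \<Rightarrow> nat \<Rightarrow> nat \<Rightarrow> bool" where
  "in_cell g i j x \<longleftrightarrow> in_col g i x \<and> in_row g j x"

fun is_gridded :: "nat \<Rightarrow> nat \<Rightarrow> (nat \<Rightarrow> nat \<Rightarrow> int) \<Rightarrow> gperm \<Rightarrow> bool" where
  "is_gridded m n M (p, cs, rs) \<longleftrightarrow>
     is_perm p \<and> length cs = Suc m \<and> length rs = Suc n \<and> sorted cs \<and> sorted rs \<and>
     cs!0 = 0 \<and> cs!m = length p \<and> rs!0 = 0 \<and> rs!n = length p \<and>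
     (\<forall>i<m. \<forall>j<n. \<forall>x<length p. \<forall>y<length p.
        in_cell (p, cs, rs) i j x \<and> in_cell (p, cs, rs) i j y \<longrightarrow>
          M i j \<noteq> 0 \<and>
          (M i j = 1 \<and> x < y \<longrightarrow> p!x < p!y) \<and>
          (M i j = -1 \<and> x < y \<longrightarrow> p!x > p!y))"

definition Grid :: "nat \<Rightarrow> nat \<Rightarrow> (nat \<Rightarrow> nat \<Rightarrow> int) \<Rightarrow> nat list set" where
  "Grid m n M = {p. \<exists>cs rs. is_gridded m n M (p, cs, rs)}"

definition gridded_class :: "nat \<Rightarrow> nat \<Rightarrow> (nat \<Rightarrow> nat \<Rightarrow> int) \<Rightarrow> nat list set \<Rightarrow> gperm set" where
  "gridded_class m n M C = {g. is_gridded m n M g \<and> fst g \<in> C}"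

definition gemb :: "nat \<Rightarrow> nat \<Rightarrow> (nat \<Rightarrow> nat) \<Rightarrow> gperm \<Rightarrow> gperm \<Rightarrow> bool" where
  "gemb m n f \<sigma> \<pi> \<longleftrightarrow> order_emb f (fst \<sigma>) (fst \<pi>) \<and>
     (\<forall>a<glen \<sigma>. \<forall>i<m. \<forall>j<n. in_cell \<sigma> i j a \<longrightarrow> in_cell \<pi> i j (f a))"

definition gcontained :: "nat \<Rightarrow> nat \<Rightarrow> gperm \<Rightarrow> gperm \<Rightarrow> bool" where
  "gcontained m n \<sigma> \<pi> \<longleftrightarrow> (\<exists>f. gemb m n f \<sigma> \<pi>)"

definition msum :: "nat \<Rightarrow> nat \<Rightarrow> (nat \<Rightarrow> nat \<Rightarrow> int) \<Rightarrow> (nat \<Rightarrow> int) \<Rightarrow> (nat \<Rightarrow> int)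
    \<Rightarrow> gperm \<Rightarrow> gperm \<Rightarrow> gperm \<Rightarrow> bool" where
  "msum m n M c r \<sigma> \<tau> \<pi> \<longleftrightarrow>
     is_gridded m n M \<sigma> \<and> is_gridded m n M \<tau> \<and> is_gridded m n M \<pi> \<and>
     (\<exists>f g. gemb m n f \<sigma> \<pi> \<and> gemb m n g \<tau> \<pi> \<and>
        f ` {..<glen \<sigma>} \<inter> g ` {..<glen \<tau>} = {} \<and>
        f ` {..<glen \<sigma>} \<union> g ` {..<glen \<tau>} = {..<glen \<pi>} \<and>
        (\<forall>a<glen \<sigma>. \<forall>b<glen \<tau>.
           (\<forall>i<m. in_col \<pi> i (f a) \<and> in_col \<pi> i (g b) \<longrightarrow>
              (if c i = 1 then f a < g b else g b < f a)) \<and>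
           (\<forall>j<n. in_row \<pi> j (f a) \<and> in_row \<pi> j (g b) \<longrightarrow>
              (if r j = 1 then fst \<pi> ! (f a) < fst \<pi> ! (g b)
               else fst \<pi> ! (g b) < fst \<pi> ! (f a)))))"

definition m_divisible :: "nat \<Rightarrow> nat \<Rightarrow> (nat \<Rightarrow> nat \<Rightarrow> int) \<Rightarrow> (nat \<Rightarrow> int) \<Rightarrow> (nat \<Rightarrow> int)
    \<Rightarrow> gperm \<Rightarrow> bool" where
  "m_divisible m n M c r \<pi> \<longleftrightarrow>
     (\<exists>\<sigma> \<tau>. glen \<sigma> > 0 \<and> glen \<tau> > 0 \<and> msum m n M c r \<sigma> \<tau> \<pi>)"

definition wqo_on :: "('a \<Rightarrow> 'a \<Rightarrow> bool) \<Rightarrow> 'a set \<Rightarrow> bool" where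
  "wqo_on le A \<longleftrightarrow> (\<forall>x\<in>A. le x x) \<and>
     (\<forall>x\<in>A. \<forall>y\<in>A. \<forall>z\<in>A. le x y \<longrightarrow> le y z \<longrightarrow> le x z) \<and>
     (\<forall>f :: nat \<Rightarrow> 'a. (\<forall>i. f i \<in> A) \<longrightarrow> (\<exists>i j :: nat. i < j \<and> le (f i) (f j)))"

definition gwqo :: "nat \<Rightarrow> nat \<Rightarrow> gperm set \<Rightarrow> bool" where
  "gwqo m n S \<longleftrightarrow> wqo_on (gcontained m n) S"

(* L-labelled gridded permutations: labels as a list (label of the point at position x) *)
definition labelled_set :: "gperm set \<Rightarrow> 'l set \<Rightarrow> (gperm \<times> 'l list) set" where
  "labelled_set S A = {(g, ls). g \<in> S \<and> length ls = glen g \<and> set ls \<subseteq> A}"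

definition lcontained :: "nat \<Rightarrow> nat \<Rightarrow> ('l \<Rightarrow> 'l \<Rightarrow> bool)
    \<Rightarrow> gperm \<times> 'l list \<Rightarrow> gperm \<times> 'l list \<Rightarrow> bool" where
  "lcontained m n le x y \<longleftrightarrow>
     (\<exists>f. gemb m n f (fst x) (fst y) \<and> (\<forall>a<glen (fst x). le (snd x ! a) (snd y ! (f a))))"

(* labelled wqo, with labels ranging over every wqo L carried by a subset of type 'l *)
definition lwqo :: "'l itself \<Rightarrow> nat \<Rightarrow> nat \<Rightarrow> gperm set \<Rightarrow> bool" where
  "lwqo _ m n S \<longleftrightarrow> (\<forall>(A :: 'l set) le. wqo_on le A \<longrightarrow>
       wqo_on (lcontained m n le) (labelled_set S A))"

end

theory Submission
  imports Defs "HOL-Library.Ramsey"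
begin

text \<open>
  The proof is Nash-Williams' minimal bad sequence argument. Every M-divisible element of
  \<open>C\<^sup>#\<close> is the M-sum of two strictly shorter elements of \<open>C\<^sup>#\<close>, and it contains
  both of them. The M-sum is monotone: embeddings of \<open>\<sigma>\<close> into \<open>\<sigma>'\<close> and of \<open>\<tau>\<close> into
  \<open>\<tau>'\<close> combine into an embedding of \<open>\<sigma> \<boxplus> \<tau>\<close> into \<open>\<sigma>' \<boxplus> \<tau>'\<close>, because the relative
  position (value) of a point of \<open>\<sigma>\<close> and a point of \<open>\<tau>\<close> is determined by their columns
  (rows), and within a common column (row) by its orientation. In a minimal bad sequence almost
  all terms are divisible, by minimality their summands form a wqo, so two of these terms have
  comparable summands, and monotonicity makes the two terms comparable. Labels are carried
  along by the embeddings, and unlabelled containment is labelled containment with one label.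
\<close>

section \<open>Well quasi-orders and minimal bad sequences\<close>

lemma wqo_onD:
  fixes f :: "nat \<Rightarrow> 'a"
  assumes "wqo_on le A" "\<And>i. f i \<in> A"
  obtains i j where "i < j" "le (f i) (f j)"
  using assms unfolding wqo_on_def by blast

lemma wqo_on_subset: "wqo_on le S \<Longrightarrow> T \<subseteq> S \<Longrightarrow> wqo_on le T"
  unfolding wqo_on_def by blast

lemma wqo_on_ascending_subseq:
  fixes u :: "nat \<Rightarrow> 'a"
  assumes "wqo_on le A" "\<And>i. u i \<in> A"
  obtains \<psi> :: "nat \<Rightarrow> nat"
  where "strict_mono \<psi>" "\<And>k l. k < l \<Longrightarrow> le (u (\<psi> k)) (u (\<psi> l))"
proof -
  define colour where "colour X = (if le (u (Min X)) (u (Max X)) then 0 else 1 :: nat)" for X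
  have "\<exists>Y t. Y \<subseteq> UNIV \<and> infinite Y \<and> t < 2 \<and> (\<forall>x\<in>Y. \<forall>y\<in>Y. x \<noteq> y \<longrightarrow> colour {x, y} = t)"
    by (rule Ramsey2) (simp_all add: colour_def)
  then obtain Y t where Y: "infinite Y" "\<forall>x\<in>Y. \<forall>y\<in>Y. x \<noteq> y \<longrightarrow> colour {x, y} = t"
    by auto
  define \<psi> where "\<psi> = enumerate Y"
  have mono: "strict_mono \<psi>"
    using Y(1) by (simp add: \<psi>_def strict_mono_enumerate)
  have in_Y: "\<psi> k \<in> Y" for k
    using Y(1) by (simp add: \<psi>_def enumerate_in_set)
  have colour_t: "colour {\<psi> k, \<psi> l} = t" if "k < l" for k l
    using Y(2) in_Y strict_monoD[OF mono that] by (metis less_irrefl)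
  have colour_\<psi>: "colour {\<psi> k, \<psi> l} = (if le (u (\<psi> k)) (u (\<psi> l)) then 0 else 1)"
    if "k < l" for k l
    using strict_monoD[OF mono that] by (simp add: colour_def)
  obtain k l where "k < l" "le (u (\<psi> k)) (u (\<psi> l))"
    using wqo_onD[OF assms(1), of "u \<circ> \<psi>"] assms(2) by auto
  then have "t = 0"
    using colour_\<psi> colour_t by simp
  then have "le (u (\<psi> k)) (u (\<psi> l))" if "k < l" for k l
    using colour_\<psi>[OF that] colour_t[OF that] by (simp split: if_splits)
  with mono show thesis by (rule that)
qed

lemma wqo_on_good_pair:
  fixes u v :: "nat \<Rightarrow> 'a"
  assumes "wqo_on le A" "\<And>i. u i \<in> A" "\<And>i. v i \<in> A"
  obtains i j where "i < j" "le (u i) (u j)" "le (v i) (v j)"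
proof -
  obtain \<psi> :: "nat \<Rightarrow> nat" where \<psi>: "strict_mono \<psi>" "\<And>k l. k < l \<Longrightarrow> le (u (\<psi> k)) (u (\<psi> l))"
    using wqo_on_ascending_subseq[where u = u, OF assms(1,2)] by auto
  obtain k l where kl: "k < l" "le (v (\<psi> k)) (v (\<psi> l))"
    using wqo_onD[OF assms(1), of "v \<circ> \<psi>"] assms(3) by auto
  show thesis by (rule that[OF strict_monoD[OF \<psi>(1) kl(1)] \<psi>(2)[OF kl(1)] kl(2)])
qed

definition bad_seq :: "('a \<Rightarrow> 'a \<Rightarrow> bool) \<Rightarrow> 'a set \<Rightarrow> (nat \<Rightarrow> 'a) \<Rightarrow> bool" where
  "bad_seq le S f \<longleftrightarrow> (\<forall>i. f i \<in> S) \<and> (\<forall>i j. i < j \<longrightarrow> \<not> le (f i) (f j))"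

lemma wqo_on_iff_no_bad_seq:
  assumes "\<forall>x\<in>S. le x x" "\<forall>x\<in>S. \<forall>y\<in>S. \<forall>z\<in>S. le x y \<longrightarrow> le y z \<longrightarrow> le x z"
  shows "wqo_on le S \<longleftrightarrow> \<not> (\<exists>f. bad_seq le S f)"
  unfolding wqo_on_def bad_seq_def using assms by meson

definition minimal_bad_seq ::
    "('a \<Rightarrow> 'a \<Rightarrow> bool) \<Rightarrow> 'a set \<Rightarrow> ('a \<Rightarrow> nat) \<Rightarrow> (nat \<Rightarrow> 'a) \<Rightarrow> bool" where
  "minimal_bad_seq le S sz f \<longleftrightarrow> bad_seq le S f \<and>
     (\<forall>k g. bad_seq le S g \<and> (\<forall>i<k. g i = f i) \<longrightarrow> sz (f k) \<le> sz (g k))"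

definition bad_prefix :: "('a \<Rightarrow> 'a \<Rightarrow> bool) \<Rightarrow> 'a set \<Rightarrow> 'a list \<Rightarrow> bool" where
  "bad_prefix le S xs \<longleftrightarrow> (\<exists>g. bad_seq le S g \<and> (\<forall>i<length xs. g i = xs ! i))"

lemma bad_prefix_snoc:
  assumes "bad_seq le S g" "\<forall>i<length xs. g i = xs ! i"
  shows "bad_prefix le S (xs @ [g (length xs)])"
  using assms unfolding bad_prefix_def by (auto simp: nth_append less_Suc_eq)

lemma bad_seq_if_bad_prefixes:
  assumes "\<And>k. bad_prefix le S (map x [0..<k])"
  shows "bad_seq le S x"
proof -
  have agree: "\<exists>g. bad_seq le S g \<and> (\<forall>i\<le>k. g i = x i)" for k
  proof -
    obtain g where g: "bad_seq le S g"
      "\<forall>i<length (map x [0..<Suc k]). g i = map x [0..<Suc k] ! i"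
      using assms[of "Suc k"] unfolding bad_prefix_def by blast
    have "g i = x i" if "i \<le> k" for i
      using g(2)[rule_format, of i] that by (simp del: upt_Suc)
    with g(1) show ?thesis by blast
  qed
  show ?thesis
    unfolding bad_seq_def
  proof (intro conjI allI impI)
    fix i
    obtain g where "bad_seq le S g" "\<forall>i'\<le>i. g i' = x i'"
      using agree[of i] by auto
    then show "x i \<in> S"
      unfolding bad_seq_def by (metis order_refl)
  next
    fix i j :: nat
    assume "i < j"
    obtain g where "bad_seq le S g" "\<forall>i'\<le>j. g i' = x i'"
      using agree[of j] by auto
    then show "\<not> le (x i) (x j)"
      using \<open>i < j\<close> unfolding bad_seq_def by (metis less_imp_le order_refl)
  qed
qed

lemma minimal_bad_seq_exists:
  assumes "bad_seq le S f"
  obtains x where "minimal_bad_seq le S sz x"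
proof -
  define least_ext where "least_ext xs = (ARG_MIN sz y. bad_prefix le S (xs @ [y]))" for xs
  have least_ext: "bad_prefix le S (xs @ [least_ext xs])"
    "\<And>y. bad_prefix le S (xs @ [y]) \<Longrightarrow> sz (least_ext xs) \<le> sz y"
    if xs: "bad_prefix le S xs" for xs
  proof -
    obtain g where "bad_seq le S g" "\<forall>i<length xs. g i = xs ! i"
      using xs unfolding bad_prefix_def by auto
    then have "bad_prefix le S (xs @ [g (length xs)])"
      by (rule bad_prefix_snoc)
    then show "bad_prefix le S (xs @ [least_ext xs])"
      "\<And>y. bad_prefix le S (xs @ [y]) \<Longrightarrow> sz (least_ext xs) \<le> sz y"
      unfolding least_ext_def by (metis arg_min_nat_lemma)+
  qed
  define prefix where "prefix k = rec_nat [] (\<lambda>_ xs. xs @ [least_ext xs]) k" for k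
  define x where "x k = least_ext (prefix k)" for k
  have prefix: "prefix k = map x [0..<k]" for k
    by (induction k) (simp_all add: prefix_def x_def)
  have x_least_ext: "least_ext (map x [0..<k]) = x k" for k
    by (simp add: x_def prefix)
  have bad_prefix_x: "bad_prefix le S (map x [0..<k])" for k
  proof (induction k)
    case 0
    then show ?case using assms by (auto simp: bad_prefix_def)
  next
    case (Suc k)
    then show ?case using least_ext(1)[OF Suc] x_least_ext by simp
  qed
  have "bad_seq le S x"
    using bad_prefix_x by (rule bad_seq_if_bad_prefixes)
  moreover have "sz (x k) \<le> sz (g k)" if "bad_seq le S g" "\<forall>i<k. g i = x i" for k g
  proof -
    have "bad_prefix le S (map x [0..<k] @ [g k])"
      using bad_prefix_snoc[OF that(1), of "map x [0..<k]"] that(2) by simp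
    then show ?thesis
      using least_ext(2)[OF bad_prefix_x] x_least_ext by metis
  qed
  ultimately show thesis
    by (intro that) (auto simp: minimal_bad_seq_def)
qed

lemma bad_seq_graft:
  assumes trans: "\<forall>x\<in>S. \<forall>y\<in>S. \<forall>z\<in>S. le x y \<longrightarrow> le y z \<longrightarrow> le x z"
    and x: "bad_seq le S x" and y: "bad_seq le S y"
    and below: "\<And>k. le (y k) (x (\<phi> k))" "\<And>k. p \<le> \<phi> k"
  shows "bad_seq le S (\<lambda>i. if i < p then x i else y (i - p))"
  unfolding bad_seq_def
proof (intro conjI allI impI)
  show "(if i < p then x i else y (i - p)) \<in> S" for i
    using x y by (simp add: bad_seq_def)
  fix i j :: nat
  assume "i < j"
  consider "j < p" | "i < p" "p \<le> j" | "p \<le> i"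
    using \<open>i < j\<close> by linarith
  then show "\<not> le (if i < p then x i else y (i - p)) (if j < p then x j else y (j - p))"
  proof cases
    case 1
    then show ?thesis using x \<open>i < j\<close> by (simp add: bad_seq_def)
  next
    case 2
    have "i < \<phi> (j - p)"
      using 2 below(2)[of "j - p"] by simp
    then have "\<not> le (x i) (x (\<phi> (j - p)))"
      using x by (simp add: bad_seq_def)
    moreover have "x i \<in> S" "y (j - p) \<in> S" "x (\<phi> (j - p)) \<in> S"
      using x y by (simp_all add: bad_seq_def)
    ultimately have "\<not> le (x i) (y (j - p))"
      using trans below(1)[of "j - p"] by blast
    then show ?thesis using 2 by simp
  next
    case 3
    then show ?thesis using y \<open>i < j\<close> by (simp add: bad_seq_def)
  qed
qed

lemma wqo_on_below_minimal_bad_seq: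
  assumes refl: "\<forall>x\<in>S. le x x"
    and trans: "\<forall>x\<in>S. \<forall>y\<in>S. \<forall>z\<in>S. le x y \<longrightarrow> le y z \<longrightarrow> le x z"
    and x: "minimal_bad_seq le S sz x" and "B \<subseteq> S"
    and below: "\<And>y. y \<in> B \<Longrightarrow> \<exists>i. le y (x i) \<and> sz y < sz (x i)"
  shows "wqo_on le B"
proof (rule ccontr)
  have "\<forall>y\<in>B. le y y" "\<forall>u\<in>B. \<forall>v\<in>B. \<forall>w\<in>B. le u v \<longrightarrow> le v w \<longrightarrow> le u w"
    using refl trans \<open>B \<subseteq> S\<close> by (meson subsetD)+
  moreover assume "\<not> wqo_on le B"
  ultimately obtain y where y: "bad_seq le B y"
    using wqo_on_iff_no_bad_seq by blast
  have "\<forall>k. \<exists>i. le (y k) (x i) \<and> sz (y k) < sz (x i)"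
    using y below by (simp add: bad_seq_def)
  then obtain \<phi> where \<phi>: "\<And>k. le (y k) (x (\<phi> k))" "\<And>k. sz (y k) < sz (x (\<phi> k))"
    by metis
  obtain k0 where k0: "\<And>k. \<phi> k0 \<le> \<phi> k"
    using ex_has_least_nat[of "\<lambda>_. True" 0 \<phi>] by blast
  \<comment> \<open>Grafting the tail of \<open>y\<close> onto \<open>x\<close> at the least index \<open>\<phi> k0\<close> gives a bad sequence
    that is smaller than \<open>x\<close> there.\<close>
  let ?p = "\<phi> k0"
  let ?g = "\<lambda>i. if i < ?p then x i else y (k0 + (i - ?p))"
  have "bad_seq le S (\<lambda>k. y (k0 + k))"
    using y \<open>B \<subseteq> S\<close> by (auto simp: bad_seq_def)
  then have "bad_seq le S ?g"
    using bad_seq_graft[OF trans, where x = x and y = "\<lambda>k. y (k0 + k)"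
        and \<phi> = "\<lambda>k. \<phi> (k0 + k)" and p = ?p] x \<phi>(1) k0
    by (simp add: minimal_bad_seq_def)
  moreover have "\<forall>i<?p. ?g i = x i"
    by simp
  ultimately have "sz (x ?p) \<le> sz (?g ?p)"
    using x unfolding minimal_bad_seq_def by blast
  also have "\<dots> < sz (x ?p)"
    using \<phi>(2)[of k0] by simp
  finally show False by simp
qed

lemma bad_seq_finitely_often_in_wqo:
  assumes "bad_seq le S x" "wqo_on le I"
  shows "finite {i. x i \<in> I}"
proof (rule ccontr)
  assume inf: "infinite {i. x i \<in> I}"
  define e where "e = enumerate {i. x i \<in> I}"
  have "x (e k) \<in> I" for k
    using enumerate_in_set[OF inf] by (simp add: e_def)
  then obtain k l where "k < l" "le (x (e k)) (x (e l))"
    using wqo_onD[OF assms(2), of "x \<circ> e"] by auto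
  moreover have "e k < e l"
    using strict_mono_enumerate[OF inf] \<open>k < l\<close> by (simp add: e_def strict_mono_less)
  ultimately show False
    using assms(1) by (simp add: bad_seq_def)
qed

lemma wqo_on_if_decomposable:
  fixes sz :: "'a \<Rightarrow> nat"
  assumes refl: "\<forall>x\<in>S. le x x"
    and trans: "\<forall>x\<in>S. \<forall>y\<in>S. \<forall>z\<in>S. le x y \<longrightarrow> le y z \<longrightarrow> le x z"
    and wqo_I: "wqo_on le I"
    and decompose: "\<And>x. x \<in> S \<Longrightarrow> x \<notin> I \<Longrightarrow>
       \<exists>a b. a \<in> S \<and> b \<in> S \<and> sz a < sz x \<and> sz b < sz x \<and> join a b x"
    and part_le: "\<And>a b x. a \<in> S \<Longrightarrow> b \<in> S \<Longrightarrow> x \<in> S \<Longrightarrow> join a b x \<Longrightarrow> le a x \<and> le b x"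
    and join_mono: "\<And>a b x a' b' x'. a \<in> S \<Longrightarrow> b \<in> S \<Longrightarrow> x \<in> S \<Longrightarrow> a' \<in> S \<Longrightarrow> b' \<in> S \<Longrightarrow>
       x' \<in> S \<Longrightarrow> join a b x \<Longrightarrow> join a' b' x' \<Longrightarrow> le a a' \<Longrightarrow> le b b' \<Longrightarrow> le x x'"
  shows "wqo_on le S"
proof (rule ccontr)
  assume "\<not> wqo_on le S"
  then obtain f where "bad_seq le S f"
    using wqo_on_iff_no_bad_seq[OF refl trans] by blast
  then obtain x where x: "minimal_bad_seq le S sz x"
    by (rule minimal_bad_seq_exists)
  then have x_bad_seq: "bad_seq le S x"
    by (simp add: minimal_bad_seq_def)
  then have x_S: "x i \<in> S" and x_bad: "i < j \<Longrightarrow> \<not> le (x i) (x j)" for i j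
    by (auto simp: bad_seq_def)
  have "finite {i. x i \<in> I}"
    using x_bad_seq wqo_I by (rule bad_seq_finitely_often_in_wqo)
  then obtain N where N: "\<And>i. N \<le> i \<Longrightarrow> x i \<notin> I"
    by (meson finite_nat_set_iff_bounded mem_Collect_eq not_less)
  have "\<forall>i. \<exists>a b. N \<le> i \<longrightarrow>
      a \<in> S \<and> b \<in> S \<and> sz a < sz (x i) \<and> sz b < sz (x i) \<and> join a b (x i)"
    using decompose[OF x_S N] by blast
  then obtain a b where ab: "\<And>i. N \<le> i \<Longrightarrow>
      a i \<in> S \<and> b i \<in> S \<and> sz (a i) < sz (x i) \<and> sz (b i) < sz (x i) \<and> join (a i) (b i) (x i)"
    by metis
  define B where "B = a ` {N..} \<union> b ` {N..}"
  have "wqo_on le B"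
  proof (rule wqo_on_below_minimal_bad_seq[OF refl trans x])
    show "B \<subseteq> S"
      using ab by (auto simp: B_def)
    show "\<exists>i. le y (x i) \<and> sz y < sz (x i)" if "y \<in> B" for y
      using that ab part_le x_S unfolding B_def by fastforce
  qed
  then obtain i j where "i < j" "le (a (N + i)) (a (N + j))" "le (b (N + i)) (b (N + j))"
    by (rule wqo_on_good_pair[where u = "\<lambda>i. a (N + i)" and v = "\<lambda>i. b (N + i)"])
      (auto simp: B_def)
  then have "le (x (N + i)) (x (N + j))"
    using ab[of "N + i"] ab[of "N + j"] x_S
    by (intro join_mono[of "a (N + i)" "b (N + i)" "x (N + i)" "a (N + j)" "b (N + j)" "x (N + j)"]) auto
  with x_bad \<open>i < j\<close> show False by simp
qed

lemma wqo_on_image_iff: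
  fixes h :: "'a \<Rightarrow> 'b"
  assumes "\<And>x y. x \<in> T \<Longrightarrow> y \<in> T \<Longrightarrow> le' x y \<longleftrightarrow> le (h x) (h y)"
  shows "wqo_on le' T \<longleftrightarrow> wqo_on le (h ` T)"
proof -
  have "(\<forall>f :: nat \<Rightarrow> 'a. (\<forall>i. f i \<in> T) \<longrightarrow> (\<exists>i j. i < j \<and> le' (f i) (f j))) \<longleftrightarrow>
      (\<forall>f :: nat \<Rightarrow> 'b. (\<forall>i. f i \<in> h ` T) \<longrightarrow> (\<exists>i j. i < j \<and> le (f i) (f j)))"
  proof (intro iffI allI impI)
    fix f :: "nat \<Rightarrow> 'b"
    assume good: "\<forall>f :: nat \<Rightarrow> 'a. (\<forall>i. f i \<in> T) \<longrightarrow> (\<exists>i j. i < j \<and> le' (f i) (f j))"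
      and "\<forall>i. f i \<in> h ` T"
    then have "\<forall>i. inv_into T h (f i) \<in> T" "\<And>i. h (inv_into T h (f i)) = f i"
      by (auto simp: inv_into_into f_inv_into_f)
    then show "\<exists>i j. i < j \<and> le (f i) (f j)"
      using good[rule_format, of "\<lambda>i. inv_into T h (f i)"] assms by metis
  next
    fix f :: "nat \<Rightarrow> 'a"
    assume good: "\<forall>f :: nat \<Rightarrow> 'b. (\<forall>i. f i \<in> h ` T) \<longrightarrow> (\<exists>i j. i < j \<and> le (f i) (f j))"
      and "\<forall>i. f i \<in> T"
    then show "\<exists>i j. i < j \<and> le' (f i) (f j)"
      using good[rule_format, of "\<lambda>i. h (f i)"] assms by auto
  qed
  then show ?thesis
    unfolding wqo_on_def using assms by auto
qed


section \<open>Cells of gridded permutations\<close>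

lemma sorted_block_less:
  fixes cs :: "nat list"
  assumes "sorted cs" "i' < length cs" "i < i'" "x < cs ! Suc i" "cs ! i' \<le> y"
  shows "x < y"
  using sorted_nth_mono[OF assms(1), of "Suc i" i'] assms by simp

lemma sorted_block_exists:
  fixes cs :: "nat list"
  assumes "sorted cs" "length cs = Suc m" "cs ! 0 = 0" "cs ! m = L" "x < L"
  obtains i where "i < m" "cs ! i \<le> x" "x < cs ! Suc i"
proof -
  let ?K = "{k. k < m \<and> cs ! k \<le> x}"
  define i where "i = Max ?K"
  have fin: "finite ?K"
    by simp
  have "0 < m"
    using assms by (cases m) auto
  then have "i \<in> ?K"
    unfolding i_def using assms(3) fin by (intro Max_in) auto
  moreover have "x < cs ! Suc i"
  proof (cases "Suc i < m")
    case True
    have "Suc i \<notin> ?K"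
    proof
      assume "Suc i \<in> ?K"
      then have "Suc i \<le> i"
        unfolding i_def using Max_ge[OF fin] by blast
      then show False by simp
    qed
    then show ?thesis using True by simp
  next
    case False
    then have "Suc i = m" using \<open>i \<in> ?K\<close> by simp
    then show ?thesis using assms(4,5) by simp
  qed
  ultimately show thesis
    by (intro that[of i]) auto
qed

lemma sorted_block_unique:
  fixes cs :: "nat list"
  assumes "sorted cs" "length cs = Suc m" "i < m" "i' < m"
    and "cs ! i \<le> x" "x < cs ! Suc i" "cs ! i' \<le> x" "x < cs ! Suc i'"
  shows "i = i'"
proof (rule ccontr)
  assume "i \<noteq> i'"
  then consider "i < i'" | "i' < i" by linarith
  then show False
  proof cases
    case 1
    then show False using sorted_block_less[OF assms(1), of i' i x x] assms by simp
  next
    case 2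
    then show False using sorted_block_less[OF assms(1), of i i' x x] assms by simp
  qed
qed

lemma sorted_block_compare:
  fixes cs cs' :: "nat list"
  assumes "sorted cs" "sorted cs'" "length cs = Suc m" "length cs' = Suc m" "i < m" "i' < m"
    and "cs ! i \<le> x" "x < cs ! Suc i" "cs ! i' \<le> y" "y < cs ! Suc i'"
    and "cs' ! i \<le> x'" "x' < cs' ! Suc i" "cs' ! i' \<le> y'" "y' < cs' ! Suc i'"
    and "i = i' \<Longrightarrow> x < y \<longleftrightarrow> x' < y'"
  shows "x < y \<longleftrightarrow> x' < y'"
proof -
  consider "i < i'" | "i' < i" | "i = i'" by linarith
  then show ?thesis
  proof cases
    case 1
    then have "x < y" "x' < y'"
      using sorted_block_less[OF assms(1), of i' i x y] sorted_block_less[OF assms(2), of i' i x' y']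
        assms by simp_all
    then show ?thesis by simp
  next
    case 2
    then have "y < x" "y' < x'"
      using sorted_block_less[OF assms(1), of i i' y x] sorted_block_less[OF assms(2), of i i' y' x']
        assms by simp_all
    then show ?thesis by auto
  qed (use assms in simp)
qed

lemma perm_nth_less: "is_perm p \<Longrightarrow> x < length p \<Longrightarrow> p ! x < length p"
  unfolding is_perm_def by (metis atLeastLessThan_iff nth_mem)

lemma gridded_cell_exists:
  assumes "is_gridded m n M \<pi>" "x < glen \<pi>"
  obtains i j where "i < m" "j < n" "in_cell \<pi> i j x"
proof -
  obtain p cs rs where \<pi>: "\<pi> = (p, cs, rs)" by (cases \<pi>)
  have G: "is_perm p" "sorted cs" "length cs = Suc m" "cs ! 0 = 0" "cs ! m = length p"
    "sorted rs" "length rs = Suc n" "rs ! 0 = 0" "rs ! n = length p"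
    using assms(1) by (simp_all add: \<pi>)
  have x: "x < length p"
    using assms(2) by (simp add: \<pi> glen_def)
  obtain i where "i < m" "cs ! i \<le> x" "x < cs ! Suc i"
    using sorted_block_exists[OF G(2-5) x] by blast
  moreover obtain j where "j < n" "rs ! j \<le> p ! x" "p ! x < rs ! Suc j"
    using sorted_block_exists[OF G(6-9) perm_nth_less[OF G(1) x]] by blast
  ultimately show thesis
    using that by (simp add: \<pi> in_cell_def)
qed

lemma gridded_cell_unique:
  assumes "is_gridded m n M \<pi>" "i < m" "i' < m" "j < n" "j' < n"
    and "in_cell \<pi> i j x" "in_cell \<pi> i' j' x"
  shows "i = i' \<and> j = j'"
proof -
  obtain p cs rs where \<pi>: "\<pi> = (p, cs, rs)" by (cases \<pi>)
  have G: "sorted cs" "length cs = Suc m" "sorted rs" "length rs = Suc n"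
    using assms(1) by (simp_all add: \<pi>)
  show ?thesis
    using sorted_block_unique[OF G(1,2) assms(2,3), of x] sorted_block_unique[OF G(3,4) assms(4,5), of "p ! x"]
      assms(6,7) by (simp add: \<pi> in_cell_def)
qed

lemma in_col_compare:
  assumes "is_gridded m n M \<pi>" "is_gridded m n M \<pi>'" "i < m" "i' < m"
    and "in_col \<pi> i x" "in_col \<pi> i' y" "in_col \<pi>' i x'" "in_col \<pi>' i' y'"
    and "i = i' \<Longrightarrow> x < y \<longleftrightarrow> x' < y'"
  shows "x < y \<longleftrightarrow> x' < y'"
proof -
  obtain p cs rs where \<pi>: "\<pi> = (p, cs, rs)" by (cases \<pi>)
  obtain p' cs' rs' where \<pi>': "\<pi>' = (p', cs', rs')" by (cases \<pi>')
  show ?thesis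
    using sorted_block_compare[of cs cs' m i i' x y x' y'] assms by (simp add: \<pi> \<pi>')
qed

lemma in_row_compare:
  assumes "is_gridded m n M \<pi>" "is_gridded m n M \<pi>'" "j < n" "j' < n"
    and "in_row \<pi> j x" "in_row \<pi> j' y" "in_row \<pi>' j x'" "in_row \<pi>' j' y'"
    and "j = j' \<Longrightarrow> fst \<pi> ! x < fst \<pi> ! y \<longleftrightarrow> fst \<pi>' ! x' < fst \<pi>' ! y'"
  shows "fst \<pi> ! x < fst \<pi> ! y \<longleftrightarrow> fst \<pi>' ! x' < fst \<pi>' ! y'"
proof -
  obtain p cs rs where \<pi>: "\<pi> = (p, cs, rs)" by (cases \<pi>)
  obtain p' cs' rs' where \<pi>': "\<pi>' = (p', cs', rs')" by (cases \<pi>')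
  show ?thesis
    using sorted_block_compare[of rs rs' n j j' "p ! x" "p ! y" "p' ! x'" "p' ! y'"] assms
    by (simp add: \<pi> \<pi>')
qed


lemma gemb_less_glen: "gemb m n f \<sigma> \<pi> \<Longrightarrow> a < glen \<sigma> \<Longrightarrow> f a < glen \<pi>"
  unfolding gemb_def order_emb_def glen_def by blast

lemma gemb_id: "gemb m n id \<pi> \<pi>"
  unfolding gemb_def order_emb_def glen_def by simp

lemma gemb_comp: "gemb m n f \<rho> \<sigma> \<Longrightarrow> gemb m n h \<sigma> \<pi> \<Longrightarrow> gemb m n (h \<circ> f) \<rho> \<pi>"
  unfolding gemb_def order_emb_def glen_def by auto

lemma gemb_compare:
  assumes "gemb m n f \<sigma> \<pi>" "a < glen \<sigma>" "b < glen \<sigma>"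
  shows "f a < f b \<longleftrightarrow> a < b" "fst \<pi> ! f a < fst \<pi> ! f b \<longleftrightarrow> fst \<sigma> ! a < fst \<sigma> ! b"
  using assms unfolding gemb_def order_emb_def glen_def by (metis linorder_neqE_nat less_asym)+

lemma gemb_inj_on: "gemb m n f \<sigma> \<pi> \<Longrightarrow> inj_on f {..<glen \<sigma>}"
  by (rule inj_onI) (metis gemb_compare(1) lessThan_iff less_irrefl linorder_neqE_nat)

lemma gemb_in_cell_iff:
  assumes "is_gridded m n M \<sigma>" "is_gridded m n M \<pi>" "gemb m n f \<sigma> \<pi>"
    and "a < glen \<sigma>" "i < m" "j < n"
  shows "in_cell \<pi> i j (f a) \<longleftrightarrow> in_cell \<sigma> i j a"
proof
  assume "in_cell \<sigma> i j a"
  then show "in_cell \<pi> i j (f a)"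
    using assms(3-6) unfolding gemb_def by blast
next
  assume fa: "in_cell \<pi> i j (f a)"
  obtain i0 j0 where a: "i0 < m" "j0 < n" "in_cell \<sigma> i0 j0 a"
    using gridded_cell_exists[OF assms(1,4)] by blast
  then have "in_cell \<pi> i0 j0 (f a)"
    using assms(3,4) unfolding gemb_def by blast
  then have "i0 = i \<and> j0 = j"
    using gridded_cell_unique[OF assms(2) a(1) assms(5) a(2) assms(6)] fa by blast
  then show "in_cell \<sigma> i j a"
    using a(3) by simp
qed

section \<open>The M-sum and its universal property\<close>

definition oriented_before :: "nat \<Rightarrow> nat \<Rightarrow> (nat \<Rightarrow> int) \<Rightarrow> (nat \<Rightarrow> int)
    \<Rightarrow> gperm \<Rightarrow> gperm \<Rightarrow> gperm \<Rightarrow> (nat \<Rightarrow> nat) \<Rightarrow> (nat \<Rightarrow> nat) \<Rightarrow> bool" where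
  "oriented_before m n c r \<sigma> \<tau> \<pi> f g \<longleftrightarrow>
     (\<forall>a<glen \<sigma>. \<forall>b<glen \<tau>.
        (\<forall>i<m. in_col \<pi> i (f a) \<and> in_col \<pi> i (g b) \<longrightarrow>
           (if c i = 1 then f a < g b else g b < f a)) \<and>
        (\<forall>j<n. in_row \<pi> j (f a) \<and> in_row \<pi> j (g b) \<longrightarrow>
           (if r j = 1 then fst \<pi> ! (f a) < fst \<pi> ! (g b)
            else fst \<pi> ! (g b) < fst \<pi> ! (f a))))"

definition msum_by :: "nat \<Rightarrow> nat \<Rightarrow> (nat \<Rightarrow> int) \<Rightarrow> (nat \<Rightarrow> int)
    \<Rightarrow> gperm \<Rightarrow> gperm \<Rightarrow> gperm \<Rightarrow> (nat \<Rightarrow> nat) \<Rightarrow> (nat \<Rightarrow> nat) \<Rightarrow> bool" where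
  "msum_by m n c r \<sigma> \<tau> \<pi> f g \<longleftrightarrow> gemb m n f \<sigma> \<pi> \<and> gemb m n g \<tau> \<pi> \<and>
     f ` {..<glen \<sigma>} \<inter> g ` {..<glen \<tau>} = {} \<and>
     f ` {..<glen \<sigma>} \<union> g ` {..<glen \<tau>} = {..<glen \<pi>} \<and>
     oriented_before m n c r \<sigma> \<tau> \<pi> f g"

lemma msum_iff:
  "msum m n M c r \<sigma> \<tau> \<pi> \<longleftrightarrow> is_gridded m n M \<sigma> \<and> is_gridded m n M \<tau> \<and> is_gridded m n M \<pi> \<and>
     (\<exists>f g. msum_by m n c r \<sigma> \<tau> \<pi> f g)"
  unfolding msum_def msum_by_def oriented_before_def ..

lemma msum_by_glen:
  assumes "msum_by m n c r \<sigma> \<tau> \<pi> f g"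
  shows "glen \<sigma> + glen \<tau> = glen \<pi>"
proof -
  have f: "gemb m n f \<sigma> \<pi>" and g: "gemb m n g \<tau> \<pi>"
    and disjoint: "f ` {..<glen \<sigma>} \<inter> g ` {..<glen \<tau>} = {}"
    and cover: "f ` {..<glen \<sigma>} \<union> g ` {..<glen \<tau>} = {..<glen \<pi>}"
    using assms by (simp_all add: msum_by_def)
  have "glen \<pi> = card (f ` {..<glen \<sigma>} \<union> g ` {..<glen \<tau>})"
    by (simp add: cover)
  also have "\<dots> = card (f ` {..<glen \<sigma>}) + card (g ` {..<glen \<tau>})"
    by (rule card_Un_disjoint) (simp_all add: disjoint)
  also have "\<dots> = glen \<sigma> + glen \<tau>"
    using card_image[OF gemb_inj_on[OF f]] card_image[OF gemb_inj_on[OF g]] by simp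
  finally show ?thesis by simp
qed

lemma msum_by_cover:
  assumes "msum_by m n c r \<sigma> \<tau> \<pi> f g" "u < glen \<pi>"
  shows "(\<exists>a<glen \<sigma>. u = f a) \<or> (\<exists>b<glen \<tau>. u = g b)"
proof -
  have "u \<in> f ` {..<glen \<sigma>} \<union> g ` {..<glen \<tau>}"
    using assms unfolding msum_by_def by simp
  then show ?thesis by auto
qed

lemma oriented_before_col:
  assumes "oriented_before m n c r \<sigma> \<tau> \<pi> f g" "a < glen \<sigma>" "b < glen \<tau>" "i < m"
    and "in_col \<pi> i (f a)" "in_col \<pi> i (g b)"
  shows "f a < g b \<longleftrightarrow> c i = 1" "g b < f a \<longleftrightarrow> c i \<noteq> 1"
proof -
  have "if c i = 1 then f a < g b else g b < f a"
    using assms unfolding oriented_before_def by blast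
  then show "f a < g b \<longleftrightarrow> c i = 1" "g b < f a \<longleftrightarrow> c i \<noteq> 1"
    by (auto split: if_splits)
qed

lemma oriented_before_row:
  assumes "oriented_before m n c r \<sigma> \<tau> \<pi> f g" "a < glen \<sigma>" "b < glen \<tau>" "j < n"
    and "in_row \<pi> j (f a)" "in_row \<pi> j (g b)"
  shows "fst \<pi> ! f a < fst \<pi> ! g b \<longleftrightarrow> r j = 1" "fst \<pi> ! g b < fst \<pi> ! f a \<longleftrightarrow> r j \<noteq> 1"
proof -
  have "if r j = 1 then fst \<pi> ! f a < fst \<pi> ! g b else fst \<pi> ! g b < fst \<pi> ! f a"
    using assms unfolding oriented_before_def by blast
  then show "fst \<pi> ! f a < fst \<pi> ! g b \<longleftrightarrow> r j = 1" "fst \<pi> ! g b < fst \<pi> ! f a \<longleftrightarrow> r j \<noteq> 1"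
    by (auto split: if_splits)
qed

lemma oriented_before_gemb:
  assumes "oriented_before m n c r \<sigma>' \<tau>' \<pi> f g" "gemb m n h \<sigma> \<sigma>'" "gemb m n k \<tau> \<tau>'"
  shows "oriented_before m n c r \<sigma> \<tau> \<pi> (f \<circ> h) (g \<circ> k)"
  unfolding oriented_before_def comp_def
proof (intro allI impI)
  fix a b assume "a < glen \<sigma>" "b < glen \<tau>"
  then have "h a < glen \<sigma>'" "k b < glen \<tau>'"
    using assms(2,3) by (simp_all add: gemb_less_glen)
  then show "(\<forall>i<m. in_col \<pi> i (f (h a)) \<and> in_col \<pi> i (g (k b)) \<longrightarrow>
         (if c i = 1 then f (h a) < g (k b) else g (k b) < f (h a))) \<and>
       (\<forall>j<n. in_row \<pi> j (f (h a)) \<and> in_row \<pi> j (g (k b)) \<longrightarrow>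
         (if r j = 1 then fst \<pi> ! f (h a) < fst \<pi> ! g (k b)
          else fst \<pi> ! g (k b) < fst \<pi> ! f (h a)))"
    using assms(1) unfolding oriented_before_def by blast
qed


lemma oriented_before_compare:
  assumes gridded: "is_gridded m n M \<sigma>" "is_gridded m n M \<tau>"
      "is_gridded m n M \<pi>" "is_gridded m n M \<pi>'"
    and emb: "gemb m n f \<sigma> \<pi>" "gemb m n g \<tau> \<pi>" "gemb m n f' \<sigma> \<pi>'" "gemb m n g' \<tau> \<pi>'"
    and ori: "oriented_before m n c r \<sigma> \<tau> \<pi> f g" "oriented_before m n c r \<sigma> \<tau> \<pi>' f' g'"
    and ab: "a < glen \<sigma>" "b < glen \<tau>"
  shows "f a < g b \<longleftrightarrow> f' a < g' b" "g b < f a \<longleftrightarrow> g' b < f' a"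
    "fst \<pi> ! f a < fst \<pi> ! g b \<longleftrightarrow> fst \<pi>' ! f' a < fst \<pi>' ! g' b"
    "fst \<pi> ! g b < fst \<pi> ! f a \<longleftrightarrow> fst \<pi>' ! g' b < fst \<pi>' ! f' a"
proof -
  obtain i j where ij: "i < m" "j < n" "in_cell \<sigma> i j a"
    using gridded_cell_exists[OF gridded(1) ab(1)] by blast
  obtain i' j' where ij': "i' < m" "j' < n" "in_cell \<tau> i' j' b"
    using gridded_cell_exists[OF gridded(2) ab(2)] by blast
  have "in_cell \<pi> i j (f a)" "in_cell \<pi>' i j (f' a)"
    using emb(1,3) ij ab(1) unfolding gemb_def by blast+
  moreover have "in_cell \<pi> i' j' (g b)" "in_cell \<pi>' i' j' (g' b)"
    using emb(2,4) ij' ab(2) unfolding gemb_def by blast+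
  ultimately have col: "in_col \<pi> i (f a)" "in_col \<pi>' i (f' a)" "in_col \<pi> i' (g b)" "in_col \<pi>' i' (g' b)"
    and row: "in_row \<pi> j (f a)" "in_row \<pi>' j (f' a)" "in_row \<pi> j' (g b)" "in_row \<pi>' j' (g' b)"
    by (simp_all add: in_cell_def)
  note col_ori = oriented_before_col[OF ori(1) ab ij(1)] oriented_before_col[OF ori(2) ab ij(1)]
  note row_ori = oriented_before_row[OF ori(1) ab ij(2)] oriented_before_row[OF ori(2) ab ij(2)]
  show "f a < g b \<longleftrightarrow> f' a < g' b" "g b < f a \<longleftrightarrow> g' b < f' a"
    using in_col_compare[OF gridded(3,4) ij(1) ij'(1) col(1,3,2,4)]
      in_col_compare[OF gridded(3,4) ij'(1) ij(1) col(3,1,4,2)] col_ori col by auto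
  show "fst \<pi> ! f a < fst \<pi> ! g b \<longleftrightarrow> fst \<pi>' ! f' a < fst \<pi>' ! g' b"
    "fst \<pi> ! g b < fst \<pi> ! f a \<longleftrightarrow> fst \<pi>' ! g' b < fst \<pi>' ! f' a"
    using in_row_compare[OF gridded(3,4) ij(2) ij'(2) row(1,3,2,4)]
      in_row_compare[OF gridded(3,4) ij'(2) ij(2) row(3,1,4,2)] row_ori row by auto
qed

lemma msum_by_glue:
  assumes "msum_by m n c r \<sigma> \<tau> \<pi> f g"
  obtains H where "\<And>a. a < glen \<sigma> \<Longrightarrow> H (f a) = f' a" "\<And>b. b < glen \<tau> \<Longrightarrow> H (g b) = g' b"
proof -
  have f: "gemb m n f \<sigma> \<pi>" and g: "gemb m n g \<tau> \<pi>"
    and disjoint: "f ` {..<glen \<sigma>} \<inter> g ` {..<glen \<tau>} = {}"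
    using assms by (simp_all add: msum_by_def)
  note inj = gemb_inj_on[OF f] gemb_inj_on[OF g]
  define H where "H u = (if u \<in> f ` {..<glen \<sigma>} then f' (the_inv_into {..<glen \<sigma>} f u)
      else g' (the_inv_into {..<glen \<tau>} g u))" for u
  have "H (f a) = f' a" if "a < glen \<sigma>" for a
    using that inj(1) by (simp add: H_def the_inv_into_f_f)
  moreover have "H (g b) = g' b" if "b < glen \<tau>" for b
  proof -
    have "g b \<notin> f ` {..<glen \<sigma>}"
      using disjoint that by blast
    then show ?thesis
      using that inj(2) by (simp add: H_def the_inv_into_f_f)
  qed
  ultimately show thesis
    by (rule that)
qed

lemma msum_by_order_emb:
  assumes gridded: "is_gridded m n M \<sigma>" "is_gridded m n M \<tau>"
      "is_gridded m n M \<pi>" "is_gridded m n M \<pi>'"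
    and sum: "msum_by m n c r \<sigma> \<tau> \<pi> f g"
    and emb: "gemb m n f' \<sigma> \<pi>'" "gemb m n g' \<tau> \<pi>'"
    and ori: "oriented_before m n c r \<sigma> \<tau> \<pi>' f' g'"
    and H_f: "\<And>a. a < glen \<sigma> \<Longrightarrow> H (f a) = f' a"
    and H_g: "\<And>b. b < glen \<tau> \<Longrightarrow> H (g b) = g' b"
  shows "order_emb H (fst \<pi>) (fst \<pi>')"
proof -
  have f: "gemb m n f \<sigma> \<pi>" and g: "gemb m n g \<tau> \<pi>"
    and ori_\<pi>: "oriented_before m n c r \<sigma> \<tau> \<pi> f g"
    using sum by (simp_all add: msum_by_def)
  note compare = oriented_before_compare[OF gridded f g emb ori_\<pi> ori]
  have H_compare: "(H u < H v \<longleftrightarrow> u < v) \<and> (fst \<pi>' ! H u < fst \<pi>' ! H v \<longleftrightarrow> fst \<pi> ! u < fst \<pi> ! v)"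
    if "u < glen \<pi>" "v < glen \<pi>" for u v
    using msum_by_cover[OF sum that(1)] msum_by_cover[OF sum that(2)]
  proof (elim disjE exE conjE)
    fix a a' assume "a < glen \<sigma>" "u = f a" "a' < glen \<sigma>" "v = f a'"
    then show ?thesis using gemb_compare[OF f] gemb_compare[OF emb(1)] H_f by simp
  next
    fix a b assume "a < glen \<sigma>" "u = f a" "b < glen \<tau>" "v = g b"
    then show ?thesis using compare H_f H_g by simp
  next
    fix b a assume "b < glen \<tau>" "u = g b" "a < glen \<sigma>" "v = f a"
    then show ?thesis using compare H_f H_g by simp
  next
    fix b b' assume "b < glen \<tau>" "u = g b" "b' < glen \<tau>" "v = g b'"
    then show ?thesis using gemb_compare[OF g] gemb_compare[OF emb(2)] H_g by simp
  qed
  have H_less: "H u < glen \<pi>'" if "u < glen \<pi>" for u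
    using msum_by_cover[OF sum that] H_f H_g gemb_less_glen[OF emb(1)] gemb_less_glen[OF emb(2)]
    by auto
  show ?thesis
    unfolding order_emb_def using H_less H_compare by (simp add: glen_def)
qed

lemma msum_by_gemb:
  assumes gridded: "is_gridded m n M \<sigma>" "is_gridded m n M \<tau>"
      "is_gridded m n M \<pi>" "is_gridded m n M \<pi>'"
    and sum: "msum_by m n c r \<sigma> \<tau> \<pi> f g"
    and emb: "gemb m n f' \<sigma> \<pi>'" "gemb m n g' \<tau> \<pi>'"
    and ori: "oriented_before m n c r \<sigma> \<tau> \<pi>' f' g'"
    and H_f: "\<And>a. a < glen \<sigma> \<Longrightarrow> H (f a) = f' a"
    and H_g: "\<And>b. b < glen \<tau> \<Longrightarrow> H (g b) = g' b"
  shows "gemb m n H \<pi> \<pi>'"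
proof -
  have f: "gemb m n f \<sigma> \<pi>" and g: "gemb m n g \<tau> \<pi>"
    using sum by (simp_all add: msum_by_def)
  have "in_cell \<pi>' i j (H u)"
    if "u < glen \<pi>" "i < m" "j < n" "in_cell \<pi> i j u" for u i j
    using msum_by_cover[OF sum that(1)]
  proof (elim disjE exE conjE)
    fix a assume "a < glen \<sigma>" "u = f a"
    then show ?thesis
      using that gemb_in_cell_iff[OF gridded(1,3) f] gemb_in_cell_iff[OF gridded(1,4) emb(1)] H_f
      by simp
  next
    fix b assume "b < glen \<tau>" "u = g b"
    then show ?thesis
      using that gemb_in_cell_iff[OF gridded(2,3) g] gemb_in_cell_iff[OF gridded(2,4) emb(2)] H_g
      by simp
  qed
  then show ?thesis
    unfolding gemb_def using msum_by_order_emb[OF assms] by blast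
qed

lemma gridded_class_gemb_closed:
  assumes "perm_class C" "\<pi> \<in> gridded_class m n M C" "is_gridded m n M \<sigma>" "gemb m n f \<sigma> \<pi>"
  shows "\<sigma> \<in> gridded_class m n M C"
proof -
  have "is_perm (fst \<sigma>)"
    using assms(3) by (cases \<sigma>) simp
  moreover have "contained (fst \<sigma>) (fst \<pi>)"
    using assms(4) unfolding gemb_def contained_def by blast
  ultimately have "fst \<sigma> \<in> C"
    using assms(1,2) unfolding perm_class_def gridded_class_def by blast
  then show ?thesis
    using assms(3) by (simp add: gridded_class_def)
qed

lemma m_divisible_decompose:
  assumes "perm_class C" "\<pi> \<in> gridded_class m n M C" "m_divisible m n M c r \<pi>"
  obtains \<sigma> \<tau> f g where "\<sigma> \<in> gridded_class m n M C" "\<tau> \<in> gridded_class m n M C"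
    "glen \<sigma> < glen \<pi>" "glen \<tau> < glen \<pi>" "msum_by m n c r \<sigma> \<tau> \<pi> f g"
proof -
  obtain \<sigma> \<tau> f g where nonempty: "glen \<sigma> > 0" "glen \<tau> > 0"
    and gridded: "is_gridded m n M \<sigma>" "is_gridded m n M \<tau>"
    and sum: "msum_by m n c r \<sigma> \<tau> \<pi> f g"
    using assms(3) unfolding m_divisible_def msum_iff by blast
  have "gemb m n f \<sigma> \<pi>" "gemb m n g \<tau> \<pi>"
    using sum by (simp_all add: msum_by_def)
  then have "\<sigma> \<in> gridded_class m n M C" "\<tau> \<in> gridded_class m n M C"
    using gridded_class_gemb_closed[OF assms(1,2)] gridded by blast+
  moreover have "glen \<sigma> < glen \<pi>" "glen \<tau> < glen \<pi>"
    using msum_by_glen[OF sum] nonempty by simp_all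
  ultimately show thesis
    using that sum by blast
qed


section \<open>Labelled gridded permutations\<close>

lemma labelled_set_label:
  assumes "x \<in> labelled_set S A" "a < glen (fst x)"
  shows "snd x ! a \<in> A"
  using assms nth_mem unfolding labelled_set_def by fastforce

lemma lcontained_refl:
  assumes "\<And>l. l \<in> A \<Longrightarrow> le l l" "x \<in> labelled_set S A"
  shows "lcontained m n le x x"
proof -
  have "le (snd x ! a) (snd x ! id a)" if "a < glen (fst x)" for a
    using assms(1) labelled_set_label[OF assms(2) that] by simp
  then show ?thesis
    unfolding lcontained_def using gemb_id by blast
qed

lemma lcontained_trans:
  assumes trans: "\<forall>k\<in>A. \<forall>l\<in>A. \<forall>l'\<in>A. le k l \<longrightarrow> le l l' \<longrightarrow> le k l'"
    and xyz: "x \<in> labelled_set S A" "y \<in> labelled_set S A" "z \<in> labelled_set S A"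
    and "lcontained m n le x y" "lcontained m n le y z"
  shows "lcontained m n le x z"
proof -
  obtain f h where f: "gemb m n f (fst x) (fst y)" "\<forall>a<glen (fst x). le (snd x ! a) (snd y ! f a)"
    and h: "gemb m n h (fst y) (fst z)" "\<forall>b<glen (fst y). le (snd y ! b) (snd z ! h b)"
    using assms(5,6) unfolding lcontained_def by blast
  have "le (snd x ! a) (snd z ! h (f a))" if "a < glen (fst x)" for a
    using trans labelled_set_label xyz f h that gemb_less_glen[OF f(1) that]
      gemb_less_glen[OF h(1) gemb_less_glen[OF f(1) that]] by meson
  then show ?thesis
    unfolding lcontained_def using gemb_comp[OF f(1) h(1)] by auto
qed

definition labelled_msum :: "nat \<Rightarrow> nat \<Rightarrow> (nat \<Rightarrow> int) \<Rightarrow> (nat \<Rightarrow> int)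
    \<Rightarrow> gperm \<times> 'l list \<Rightarrow> gperm \<times> 'l list \<Rightarrow> gperm \<times> 'l list \<Rightarrow> bool" where
  "labelled_msum m n c r x y z \<longleftrightarrow> (\<exists>f g. msum_by m n c r (fst x) (fst y) (fst z) f g \<and>
     (\<forall>a<glen (fst x). snd x ! a = snd z ! f a) \<and> (\<forall>b<glen (fst y). snd y ! b = snd z ! g b))"

lemma labelled_msum_decompose:
  assumes "perm_class C" "x \<in> labelled_set (gridded_class m n M C) A" "m_divisible m n M c r (fst x)"
  shows "\<exists>y z. y \<in> labelled_set (gridded_class m n M C) A \<and> z \<in> labelled_set (gridded_class m n M C) A \<and>
    glen (fst y) < glen (fst x) \<and> glen (fst z) < glen (fst x) \<and> labelled_msum m n c r y z x"
proof -
  have "fst x \<in> gridded_class m n M C"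
    using assms(2) by (auto simp: labelled_set_def)
  then obtain \<sigma> \<tau> f g where parts: "\<sigma> \<in> gridded_class m n M C" "\<tau> \<in> gridded_class m n M C"
    "glen \<sigma> < glen (fst x)" "glen \<tau> < glen (fst x)" and sum: "msum_by m n c r \<sigma> \<tau> (fst x) f g"
    using m_divisible_decompose[OF assms(1) _ assms(3)] by blast
  have f: "gemb m n f \<sigma> (fst x)" and g: "gemb m n g \<tau> (fst x)"
    using sum by (simp_all add: msum_by_def)
  define y where "y = (\<sigma>, map (\<lambda>a. snd x ! f a) [0..<glen \<sigma>])"
  define z where "z = (\<tau>, map (\<lambda>b. snd x ! g b) [0..<glen \<tau>])"
  have "y \<in> labelled_set (gridded_class m n M C) A" "z \<in> labelled_set (gridded_class m n M C) A"
    using parts(1,2) labelled_set_label[OF assms(2)] gemb_less_glen[OF f] gemb_less_glen[OF g]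
    by (auto simp: labelled_set_def y_def z_def)
  moreover have "labelled_msum m n c r y z x"
    unfolding labelled_msum_def using sum by (auto simp: y_def z_def)
  moreover have "glen (fst y) < glen (fst x)" "glen (fst z) < glen (fst x)"
    using parts(3,4) by (simp_all add: y_def z_def)
  ultimately show ?thesis
    by blast
qed

lemma labelled_msum_lcontained:
  assumes "labelled_msum m n c r y z x" "x \<in> labelled_set S A" "\<And>l. l \<in> A \<Longrightarrow> le l l"
  shows "lcontained m n le y x \<and> lcontained m n le z x"
proof -
  obtain f g where sum: "msum_by m n c r (fst y) (fst z) (fst x) f g"
    and labels: "\<forall>a<glen (fst y). snd y ! a = snd x ! f a" "\<forall>b<glen (fst z). snd z ! b = snd x ! g b"
    using assms(1) unfolding labelled_msum_def by blast
  have f: "gemb m n f (fst y) (fst x)" and g: "gemb m n g (fst z) (fst x)"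
    using sum by (simp_all add: msum_by_def)
  show ?thesis
    unfolding lcontained_def
    using f g labels assms(3) labelled_set_label[OF assms(2)] gemb_less_glen[OF f] gemb_less_glen[OF g]
    by (metis (no_types, lifting))
qed

lemma labelled_msum_mono:
  assumes gridded: "is_gridded m n M (fst y)" "is_gridded m n M (fst z)"
      "is_gridded m n M (fst x)" "is_gridded m n M (fst x')"
    and sums: "labelled_msum m n c r y z x" "labelled_msum m n c r y' z' x'"
    and "lcontained m n le y y'" "lcontained m n le z z'"
  shows "lcontained m n le x x'"
proof -
  obtain f g where sum: "msum_by m n c r (fst y) (fst z) (fst x) f g"
    and labels: "\<forall>a<glen (fst y). snd y ! a = snd x ! f a" "\<forall>b<glen (fst z). snd z ! b = snd x ! g b"
    using sums(1) unfolding labelled_msum_def by blast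
  obtain f' g' where sum': "msum_by m n c r (fst y') (fst z') (fst x') f' g'"
    and labels': "\<forall>a<glen (fst y'). snd y' ! a = snd x' ! f' a" "\<forall>b<glen (fst z'). snd z' ! b = snd x' ! g' b"
    using sums(2) unfolding labelled_msum_def by blast
  obtain h k where h: "gemb m n h (fst y) (fst y')" "\<forall>a<glen (fst y). le (snd y ! a) (snd y' ! h a)"
    and k: "gemb m n k (fst z) (fst z')" "\<forall>b<glen (fst z). le (snd z ! b) (snd z' ! k b)"
    using assms(7,8) unfolding lcontained_def by blast
  have emb': "gemb m n f' (fst y') (fst x')" "gemb m n g' (fst z') (fst x')"
    and ori': "oriented_before m n c r (fst y') (fst z') (fst x') f' g'"
    using sum' by (simp_all add: msum_by_def)
  obtain H where H_f: "\<And>a. a < glen (fst y) \<Longrightarrow> H (f a) = (f' \<circ> h) a"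
    and H_g: "\<And>b. b < glen (fst z) \<Longrightarrow> H (g b) = (g' \<circ> k) b"
    using msum_by_glue[OF sum, of "f' \<circ> h" "g' \<circ> k"] by blast
  have H: "gemb m n H (fst x) (fst x')"
    using msum_by_gemb[OF gridded sum gemb_comp[OF h(1) emb'(1)] gemb_comp[OF k(1) emb'(2)]
        oriented_before_gemb[OF ori' h(1) k(1)] H_f H_g] .
  have "le (snd x ! u) (snd x' ! H u)" if "u < glen (fst x)" for u
    using msum_by_cover[OF sum that]
  proof (elim disjE exE conjE)
    fix a assume a: "a < glen (fst y)" "u = f a"
    have "le (snd y ! a) (snd y' ! h a)"
      using h(2) a(1) by blast
    then show ?thesis
      using labels(1) labels'(1) H_f a gemb_less_glen[OF h(1) a(1)] by simp
  next
    fix b assume b: "b < glen (fst z)" "u = g b"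
    have "le (snd z ! b) (snd z' ! k b)"
      using k(2) b(1) by blast
    then show ?thesis
      using labels(2) labels'(2) H_g b gemb_less_glen[OF k(1) b(1)] by simp
  qed
  then show ?thesis
    unfolding lcontained_def using H by blast
qed

lemma labelled_wqo_indivisible_iff:
  assumes "perm_class C" "wqo_on le A"
  shows "wqo_on (lcontained m n le)
      (labelled_set {g \<in> gridded_class m n M C. \<not> m_divisible m n M c r g} A) \<longleftrightarrow>
    wqo_on (lcontained m n le) (labelled_set (gridded_class m n M C) A)"
    (is "wqo_on ?le (labelled_set ?I A) \<longleftrightarrow> wqo_on ?le ?S")
proof
  assume wqo_I: "wqo_on ?le (labelled_set ?I A)"
  have refl: "le l l" if "l \<in> A" for l
    using assms(2) that unfolding wqo_on_def by blast
  have trans: "\<forall>k\<in>A. \<forall>l\<in>A. \<forall>l'\<in>A. le k l \<longrightarrow> le l l' \<longrightarrow> le k l'"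
    using assms(2) unfolding wqo_on_def by blast
  have gridded: "is_gridded m n M (fst x)" if "x \<in> ?S" for x
    using that by (auto simp: labelled_set_def gridded_class_def)
  show "wqo_on ?le ?S"
  proof (rule wqo_on_if_decomposable[where sz = "\<lambda>x. glen (fst x)" and join = "labelled_msum m n c r"])
    show "\<forall>x\<in>?S. ?le x x"
      using lcontained_refl[where A = A and le = le, OF refl] by blast
    show "\<forall>x\<in>?S. \<forall>y\<in>?S. \<forall>z\<in>?S. ?le x y \<longrightarrow> ?le y z \<longrightarrow> ?le x z"
      using lcontained_trans[where A = A and le = le, OF trans] by blast
    show "wqo_on ?le (labelled_set ?I A)"
      by (rule wqo_I)
  next
    fix x assume "x \<in> ?S" "x \<notin> labelled_set ?I A"
    then have "m_divisible m n M c r (fst x)"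
      by (auto simp: labelled_set_def)
    then show "\<exists>y z. y \<in> ?S \<and> z \<in> ?S \<and> glen (fst y) < glen (fst x) \<and> glen (fst z) < glen (fst x)
        \<and> labelled_msum m n c r y z x"
      by (rule labelled_msum_decompose[OF assms(1) \<open>x \<in> ?S\<close>])
  next
    fix y z x assume "x \<in> ?S" "labelled_msum m n c r y z x"
    then show "?le y x \<and> ?le z x"
      using labelled_msum_lcontained[where A = A and le = le, OF _ _ refl] by blast
  next
    fix y z x y' z' x'
    assume "y \<in> ?S" "z \<in> ?S" "x \<in> ?S" "x' \<in> ?S"
      "labelled_msum m n c r y z x" "labelled_msum m n c r y' z' x'" "?le y y'" "?le z z'"
    then show "?le x x'"
      using labelled_msum_mono[OF gridded gridded gridded gridded] by blast
  qed
next
  assume "wqo_on ?le ?S"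
  then show "wqo_on ?le (labelled_set ?I A)"
    by (rule wqo_on_subset) (auto simp: labelled_set_def)
qed

lemma gwqo_iff_unit_labelled:
  "gwqo m n S \<longleftrightarrow> wqo_on (lcontained m n (\<lambda>_ _. True)) (labelled_set S (UNIV :: unit set))"
proof -
  have "fst ` labelled_set S (UNIV :: unit set) = S"
  proof
    show "S \<subseteq> fst ` labelled_set S (UNIV :: unit set)"
    proof
      fix g assume "g \<in> S"
      then have "(g, replicate (glen g) ()) \<in> labelled_set S UNIV"
        by (simp add: labelled_set_def)
      then show "g \<in> fst ` labelled_set S (UNIV :: unit set)"
        by (metis fst_conv image_eqI)
    qed
  qed (auto simp: labelled_set_def)
  moreover have "lcontained m n (\<lambda>_ _. True) x y \<longleftrightarrow> gcontained m n (fst x) (fst y)"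
    for x y :: "gperm \<times> unit list"
    by (simp add: lcontained_def gcontained_def)
  ultimately show ?thesis
    unfolding gwqo_def using wqo_on_image_iff[of "labelled_set S UNIV" "lcontained m n (\<lambda>_ _. True)"]
    by metis
qed

lemma wqo_on_unit: "wqo_on (\<lambda>_ _. True) (UNIV :: unit set)"
  unfolding wqo_on_def by auto

theorem lemma4p8:
  fixes m n :: nat and M :: "nat \<Rightarrow> nat \<Rightarrow> int" and c r :: "nat \<Rightarrow> int"
    and C :: "nat list set"
  assumes "partial_mult_matrix m n M c r"
    and "perm_class C"
    and "C \<subseteq> Grid m n M"
  shows "(lwqo TYPE('l) m n {g \<in> gridded_class m n M C. \<not> m_divisible m n M c r g}
            \<longleftrightarrow> lwqo TYPE('l) m n (gridded_class m n M C))
       \<and> (gwqo m n {g \<in> gridded_class m n M C. \<not> m_divisible m n M c r g}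
            \<longleftrightarrow> gwqo m n (gridded_class m n M C))"
proof
  show "lwqo TYPE('l) m n {g \<in> gridded_class m n M C. \<not> m_divisible m n M c r g}
      \<longleftrightarrow> lwqo TYPE('l) m n (gridded_class m n M C)"
    unfolding lwqo_def using labelled_wqo_indivisible_iff[OF assms(2)] by blast
  show "gwqo m n {g \<in> gridded_class m n M C. \<not> m_divisible m n M c r g}
      \<longleftrightarrow> gwqo m n (gridded_class m n M C)"
    unfolding gwqo_iff_unit_labelled by (rule labelled_wqo_indivisible_iff[OF assms(2) wqo_on_unit])
qed

end
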